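(* Let $\mathbf f\in W^{2,\infty}(\mathbb{R}/\mathbb{Z},\mathbb{R}^n)$ satisfy $L_1\,d_{\mathbb{R}/\mathbb{Z}}(\theta,\theta')\le\|\mathbf f(\theta)-\mathbf f(\theta')\|\le L_2\,d_{\mathbb{R}/\mathbb{Z}}(\theta,\theta')$ for all $\theta,\theta'$, with constants $0<L_1\le L_2$. For each $m$ let $0\le\theta_1<\dots<\theta_m<1$ (depending on $m$; indices cyclic, $\theta_{k+m}=\theta_k+1$) satisfy the equilateral condition $\|\Delta_k\mathbf f\|=L_m/m$ for $k=1,\dots,m$, where $L_m=\sum_{k=1}^m\|\Delta_k\mathbf f\|$. Define \[ \mathscr P^m_{1,ij}(\mathbf f)=\frac12\frac{g_{ij,d}}{g_{ij,n}}\left\{\Big(1-\frac{\Delta_i\mathbf f}{\|\Delta_i\mathbf f\|}\cdot\frac{\Delta_j\mathbf f}{\|\Delta_j\mathbf f\|}\Big)+\Big(1-\frac{\Delta_{i+1}\mathbf f}{\|\Delta_{i+1}\mathbf f\|}\cdot\frac{\Delta_{j+1}\mathbf f}{\|\Delta_{j+1}\mathbf f\|}\Big)\right\}, \] with $g_{ij,d}=\|\Delta_i\mathbf f\|\,\|\Delta_j\mathbf f\|$ and $g_{ij,n}=\|\Delta_i^j\mathbf f\|\,\|\Delta_{i+1}^{j+1}\mathbf f\|$. Then \[ \lim_{m\to\infty}\sum_{i\ne j}\mathscr P^m_{1,ij}(\mathbf f)=\mathcal E_1(\mathbf f). \]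
   Context: $\Delta_i^j\mathbf f=\mathbf f(\theta_j)-\mathbf f(\theta_i)$, $\Delta_i\mathbf f=\Delta_i^{i+1}\mathbf f$, with $\mathbf f$ regarded as $1$-periodic on $\mathbb{R}$; the sum is over ordered pairs $(i,j)\in\{1,\dots,m\}^2$ with $i\ne j$. With $\boldsymbol\gamma$ the arc-length reparametrization of $\mathbf f$ (length $\mathcal L$), $\boldsymbol\tau=\boldsymbol\gamma'$, $\mathcal{E}_1(\mathbf f)=\frac12\iint_{(\mathbb{R}/\mathcal L\mathbb{Z})^2}\frac{\|\boldsymbol\tau(s_1)-\boldsymbol\tau(s_2)\|^2}{\|\boldsymbol\gamma(s_1)-\boldsymbol\gamma(s_2)\|^2}ds_1ds_2$. *)

theory Defs
  imports "HOL-Analysis.Analysis"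
begin

definition circ_dist :: "real \<Rightarrow> real \<Rightarrow> real" where
  "circ_dist x y = min (frac (x - y)) (1 - frac (x - y))"

text \<open>1-periodic closed curve of class W^{2,infinity} on R/Z, i.e. (for the continuous
  representative) differentiable with Lipschitz continuous derivative.\<close>
definition W2inf_periodic :: "(real \<Rightarrow> 'a::euclidean_space) \<Rightarrow> bool" where
  "W2inf_periodic f \<longleftrightarrow>
     (\<forall>x. f (x + 1) = f x) \<and>
     (\<forall>x. f differentiable (at x)) \<and>
     (\<exists>C. \<forall>x y. norm (vector_derivative f (at x) - vector_derivative f (at y)) \<le> C * \<bar>x - y\<bar>)"

text \<open>Cyclically indexed polygon vertices f(theta_k); indices 0..m-1 (the paper's 1..m shifted);
  theta_{k+m} = theta_k + 1 and f is 1-periodic, so f(theta_k) = f(theta_(k mod m)).\<close>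
definition cyc_pt :: "(real \<Rightarrow> 'a::euclidean_space) \<Rightarrow> (nat \<Rightarrow> real) \<Rightarrow> nat \<Rightarrow> nat \<Rightarrow> 'a" where
  "cyc_pt f \<theta> m k = f (\<theta> (k mod m))"

definition Delta :: "(real \<Rightarrow> 'a::euclidean_space) \<Rightarrow> (nat \<Rightarrow> real) \<Rightarrow> nat \<Rightarrow> nat \<Rightarrow> nat \<Rightarrow> 'a" where
  "Delta f \<theta> m i j = cyc_pt f \<theta> m j - cyc_pt f \<theta> m i"

definition Delta1 :: "(real \<Rightarrow> 'a::euclidean_space) \<Rightarrow> (nat \<Rightarrow> real) \<Rightarrow> nat \<Rightarrow> nat \<Rightarrow> 'a" where
  "Delta1 f \<theta> m i = Delta f \<theta> m i (Suc i)"

definition P1 :: "(real \<Rightarrow> 'a::euclidean_space) \<Rightarrow> (nat \<Rightarrow> real) \<Rightarrow> nat \<Rightarrow> nat \<Rightarrow> nat \<Rightarrow> real" where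
  "P1 f \<theta> m i j =
     (let gd = norm (Delta1 f \<theta> m i) * norm (Delta1 f \<theta> m j);
          gn = norm (Delta f \<theta> m i j) * norm (Delta f \<theta> m (Suc i) (Suc j));
          u = \<lambda>k. Delta1 f \<theta> m k /\<^sub>R norm (Delta1 f \<theta> m k)
      in 1/2 * (gd / gn) * ((1 - u i \<bullet> u j) + (1 - u (Suc i) \<bullet> u (Suc j))))"

definition disc_E1 :: "(real \<Rightarrow> 'a::euclidean_space) \<Rightarrow> (nat \<Rightarrow> real) \<Rightarrow> nat \<Rightarrow> real" where
  "disc_E1 f \<theta> m = (\<Sum>(i, j) \<in> {(i, j). i < m \<and> j < m \<and> i \<noteq> j}. P1 f \<theta> m i j)"

definition arclen :: "(real \<Rightarrow> 'a::euclidean_space) \<Rightarrow> real \<Rightarrow> real" where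
  "arclen f t = integral {0..t} (\<lambda>u. norm (vector_derivative f (at u)))"

definition curve_length :: "(real \<Rightarrow> 'a::euclidean_space) \<Rightarrow> real" where
  "curve_length f = arclen f 1"

definition arclen_param :: "(real \<Rightarrow> 'a::euclidean_space) \<Rightarrow> real \<Rightarrow> 'a" where
  "arclen_param f = f \<circ> inv_into {0..1} (arclen f)"

definition E1 :: "(real \<Rightarrow> 'a::euclidean_space) \<Rightarrow> real" where
  "E1 f = (let L = curve_length f; \<gamma> = arclen_param f;
               \<tau> = (\<lambda>s. vector_derivative \<gamma> (at s))
           in 1/2 * (LINT p:{0..L} \<times> {0..L}|lborel.
                 (norm (\<tau> (fst p) - \<tau> (snd p)))\<^sup>2 / (norm (\<gamma> (fst p) - \<gamma> (snd p)))\<^sup>2))"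

end

theory Submission
  imports Defs "HOL-Library.Periodic_Fun"
begin

(* Parametrize the curve by arc length on [0, L). The edges of the m-th polygon cut [0, L) into cells
   C_1, ..., C_m of lengths h_i, and the discrete energy is 1/2 times the integral of the step function
   equal to 2 P_ij / (h_i h_j) on C_i x C_j for i ~= j and to 0 on the diagonal cells.

   The bi-Lipschitz bounds give a side length L_m/m of order 1/m and cells of comparable length; with the
   Lipschitz bound on f' they show that two unit edge vectors differ by at most a constant times the chord
   between the edges, so the step functions are uniformly bounded. As the side length tends to 0, the unit
   edge vectors at a point tend to the unit tangent, the vertices to the curve point and h_i m / L_m to 1,
   so off the diagonal the step functions converge to the integrand of E_1. Dominated convergence
   concludes. *)

lemma norm_normalize_diff_le:
  fixes a b :: "'a::real_normed_vector"
  assumes "b \<noteq> 0"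
  shows "norm (a /\<^sub>R norm a - b /\<^sub>R norm b) \<le> 2 * norm (a - b) / norm b"
proof (cases "a = 0")
  case True
  then show ?thesis using assms by simp
next
  case False
  have "a /\<^sub>R norm a - b /\<^sub>R norm b =
      (a - b) /\<^sub>R norm b + (inverse (norm a) - inverse (norm b)) *\<^sub>R a"
    by (simp add: algebra_simps)
  also have "norm \<dots> \<le> norm (a - b) / norm b + \<bar>inverse (norm a) - inverse (norm b)\<bar> * norm a"
    by (rule order_trans[OF norm_triangle_ineq]) (simp add: divide_inverse)
  also have "\<bar>inverse (norm a) - inverse (norm b)\<bar> * norm a = \<bar>norm b - norm a\<bar> / norm b"
    using False assms by (simp add: field_simps abs_mult[symmetric])
  also have "\<dots> \<le> norm (a - b) / norm b"
    by (intro divide_right_mono) (auto simp: norm_triangle_ineq3 abs_minus_commute)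
  finally show ?thesis by simp
qed

lemma tendsto_of_norm_diff_le:
  fixes X :: "nat \<Rightarrow> 'a::real_normed_vector"
  assumes "\<And>n. norm (X n - x) \<le> c * r n" and "r \<longlonglongrightarrow> 0"
  shows "X \<longlonglongrightarrow> x"
proof -
  have "eventually (\<lambda>n. norm (X n - x) \<le> c * r n) sequentially" using assms(1) by simp
  then have "(\<lambda>n. X n - x) \<longlonglongrightarrow> 0"
    by (rule Lim_null_comparison) (rule tendsto_mult_right_zero[OF assms(2)])
  then show ?thesis by (simp add: LIM_zero_iff)
qed

lemma emeasure_lborel_Times:
  fixes A B :: "real set"
  assumes "A \<in> sets borel" "B \<in> sets borel"
    and "emeasure lborel A = ennreal a" "emeasure lborel B = ennreal b" "0 \<le> a" "0 \<le> b"
  shows "emeasure (lborel :: (real \<times> real) measure) (A \<times> B) = ennreal (a * b)"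
proof -
  have "emeasure (lborel :: (real \<times> real) measure) (A \<times> B) = emeasure (lborel \<Otimes>\<^sub>M lborel) (A \<times> B)"
    by (simp add: lborel_prod)
  also have "\<dots> = emeasure lborel A * emeasure lborel B"
    using assms by (intro lborel.emeasure_pair_measure_Times) auto
  finally show ?thesis using assms by (simp add: ennreal_mult)
qed

lemma measure_lborel_Times:
  fixes A B :: "real set"
  assumes "A \<in> sets borel" "B \<in> sets borel"
    and "emeasure lborel A = ennreal a" "emeasure lborel B = ennreal b" "0 \<le> a" "0 \<le> b"
  shows "measure (lborel :: (real \<times> real) measure) (A \<times> B) = a * b"
  using emeasure_lborel_Times[OF assms] assms(5,6) by (simp add: measure_def)

lemma hyperplane_in_null_sets_lborel:
  fixes a :: "'a::euclidean_space"
  assumes "a \<noteq> 0"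
  shows "{x. a \<bullet> x = b} \<in> null_sets lborel"
proof -
  have "{x. a \<bullet> x = b} \<in> null_sets lebesgue"
    using negligible_hyperplane[of a b] assms by (simp add: negligible_iff_null_sets)
  moreover have "{x. a \<bullet> x = b} \<in> sets borel" using closed_hyperplane by (rule borel_closed)
  ultimately show ?thesis using null_sets_completion_iff by (metis sets_lborel)
qed

lemma Suc_mod_neq:
  fixes i j m :: nat
  assumes "0 < m" "i mod m \<noteq> j mod m"
  shows "Suc i mod m \<noteq> Suc j mod m"
proof
  assume eq: "Suc i mod m = Suc j mod m"
  have "i mod m = (Suc i + (m - 1)) mod m" using assms(1) by simp
  also have "\<dots> = (Suc j + (m - 1)) mod m" using eq by (metis mod_add_left_eq)
  also have "\<dots> = j mod m" using assms(1) by simp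
  finally show False using assms(2) by simp
qed

lemma one_minus_inner_eq:
  fixes a b :: "'a::real_inner"
  assumes "norm a = 1" "norm b = 1"
  shows "1 - a \<bullet> b = (norm (a - b))\<^sup>2 / 2"
proof -
  have "a \<bullet> a = 1" "b \<bullet> b = 1" using assms by (simp_all add: power2_norm_eq_inner[symmetric])
  moreover have "(norm (a - b))\<^sup>2 = a \<bullet> a + b \<bullet> b - 2 * (a \<bullet> b)"
    by (simp add: power2_norm_eq_inner algebra_simps inner_commute)
  ultimately show ?thesis by simp
qed

lemma circ_dist_le_abs: "circ_dist x y \<le> \<bar>x - y\<bar>"
proof (cases "x - y \<ge> 0")
  case True
  then have "frac (x - y) \<le> x - y" by (simp add: frac_def)
  then show ?thesis unfolding circ_dist_def using True by auto
next
  case False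
  then have "floor (x - y) \<le> -1" by linarith
  then have "1 - frac (x - y) \<le> y - x" unfolding frac_def by linarith
  then show ?thesis unfolding circ_dist_def using False by auto
qed

lemma circ_dist_eq_diff:
  assumes "0 \<le> x - y" "x - y \<le> 1/2"
  shows "circ_dist x y = x - y"
proof -
  have "frac (x - y) = x - y" using assms by (simp add: frac_eq)
  then show ?thesis unfolding circ_dist_def using assms by simp
qed

lemma circ_dist_commute: "circ_dist x y = circ_dist y x"
proof (cases "x - y \<in> \<int>")
  case True
  then have "y - x \<in> \<int>" by (metis Ints_minus minus_diff_eq)
  then show ?thesis using True unfolding circ_dist_def by (simp add: frac_eq_0_iff[THEN iffD2])
next
  case False
  then have "frac (y - x) = 1 - frac (x - y)" using frac_neg[of "x - y"] by simp
  then show ?thesis unfolding circ_dist_def by simp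
qed

lemma circ_dist_add_of_int: "circ_dist (x + of_int n) y = circ_dist x y"
proof -
  have "frac (x + of_int n - y) = frac (x - y)"
    using frac_add_of_int_right[of "x - y" n] by (simp add: algebra_simps)
  then show ?thesis unfolding circ_dist_def by simp
qed

lemma circ_dist_pos:
  assumes "x \<noteq> y" "\<bar>x - y\<bar> < 1"
  shows "0 < circ_dist x y"
proof -
  have "x - y \<notin> \<int>"
  proof
    assume "x - y \<in> \<int>"
    then obtain k where k: "x - y = of_int k" by (auto elim: Ints_cases)
    then have "k = 0" using assms(2) by (simp add: abs_less_iff)
    then show False using k assms(1) by simp
  qed
  then have "0 < frac (x - y)" using frac_ge_0[of "x - y"] frac_eq_0_iff[of "x - y"] by linarith
  then show ?thesis unfolding circ_dist_def using frac_lt_1[of "x - y"] by simp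
qed

lemma circ_dist_attained: "\<exists>n::int. \<bar>x - (y + of_int n)\<bar> = circ_dist x y"
proof (cases "frac (x - y) \<le> 1/2")
  case True
  have "\<bar>x - (y + of_int \<lfloor>x - y\<rfloor>)\<bar> = frac (x - y)"
    using of_int_floor_le[of "x - y"] unfolding frac_def by linarith
  then show ?thesis unfolding circ_dist_def using True by auto
next
  case False
  have "\<bar>x - (y + of_int (\<lfloor>x - y\<rfloor> + 1))\<bar> = 1 - frac (x - y)"
    using real_of_int_floor_add_one_gt[of "x - y"] unfolding frac_def by simp linarith
  then show ?thesis unfolding circ_dist_def using False by (intro exI[of _ "\<lfloor>x - y\<rfloor> + 1"]) auto
qed

section \<open>Bi-Lipschitz closed curves with Lipschitz derivative\<close>

locale bilipschitz_curve =
  fixes f f' :: "real \<Rightarrow> 'a::euclidean_space" and K L1 L2 :: real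
  assumes periodic: "f (x + 1) = f x"
    and has_derivative: "(f has_vector_derivative f' x) (at x)"
    and derivative_lipschitz: "norm (f' x - f' y) \<le> K * \<bar>x - y\<bar>"
    and L1_pos: "0 < L1"
    and L1_le_L2: "L1 \<le> L2"
    and bilipschitz: "L1 * circ_dist x y \<le> norm (f x - f y)" "norm (f x - f y) \<le> L2 * circ_dist x y"
begin

definition tangent :: "real \<Rightarrow> 'a" where
  "tangent x = f' x /\<^sub>R norm (f' x)"

definition tangent_lip :: real where
  "tangent_lip = 2 * K / L1"

lemma L2_pos: "0 < L2"
  using L1_pos L1_le_L2 by simp

lemma K_nonneg: "0 \<le> K"
proof -
  have "norm (f' 1 - f' 0) \<le> K" using derivative_lipschitz[of 1 0] by simp
  then show ?thesis using norm_ge_zero order_trans by blast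
qed

lemma tangent_lip_nonneg: "0 \<le> tangent_lip"
  using K_nonneg L1_pos by (simp add: tangent_lip_def)

lemma periodic_of_int: "f (x + of_int n) = f x"
proof -
  interpret periodic_fun_simple' f by standard (rule periodic)
  show ?thesis by (rule plus_of_int)
qed

lemma vector_derivative_eq: "vector_derivative f (at x) = f' x"
  using has_derivative by (rule vector_derivative_at)

lemma f'_periodic: "f' (x + 1) = f' x"
proof -
  have "((f \<circ> (\<lambda>t. t + 1)) has_vector_derivative (1 *\<^sub>R f' (x + 1))) (at x)"
    by (rule vector_diff_chain_at) (auto intro!: derivative_eq_intros has_derivative)
  moreover have "f \<circ> (\<lambda>t. t + 1) = f" using periodic by (auto simp: o_def)
  ultimately have "(f has_vector_derivative f' (x + 1)) (at x)" by simp
  then show ?thesis using has_derivative vector_derivative_unique_at by blast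
qed

lemma f'_periodic_of_int: "f' (x + of_int n) = f' x"
proof -
  interpret periodic_fun_simple' f' by standard (rule f'_periodic)
  show ?thesis by (rule plus_of_int)
qed

lemma continuous_on_f': "continuous_on S f'"
proof -
  have "K-lipschitz_on UNIV f'"
    using K_nonneg derivative_lipschitz by (auto simp: lipschitz_on_def dist_norm dist_real_def)
  then show ?thesis by (rule continuous_on_subset[OF lipschitz_on_continuous_on]) simp
qed

lemma continuous_on_f: "continuous_on S f"
  using has_derivative by (meson continuous_at_imp_continuous_on has_vector_derivative_continuous)

lemma lipschitz: "norm (f x - f y) \<le> L2 * \<bar>x - y\<bar>"
proof -
  have "L2 * circ_dist x y \<le> L2 * \<bar>x - y\<bar>"
    using circ_dist_le_abs L2_pos by (intro mult_left_mono) auto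
  then show ?thesis using bilipschitz(2)[of x y] by linarith
qed

lemma linearization: "norm (f y - f x - (y - x) *\<^sub>R f' x) \<le> K * (y - x)\<^sup>2"
proof -
  have "norm (f y - f x - (y - x) *\<^sub>R f' x) \<le> norm (y - x) * (K * \<bar>y - x\<bar>)"
  proof (rule vector_differentiable_bound_linearization[where S="closed_segment x y"])
    show "\<And>z. z \<in> closed_segment x y \<Longrightarrow> (f has_vector_derivative f' z) (at z within closed_segment x y)"
      using has_derivative has_vector_derivative_at_within by blast
    fix z assume "z \<in> closed_segment x y"
    then have "\<bar>z - x\<bar> \<le> \<bar>y - x\<bar>" by (auto simp: closed_segment_eq_real_ivl split: if_splits)
    then show "norm (f' z - f' x) \<le> K * \<bar>y - x\<bar>"
      using derivative_lipschitz[of z x] K_nonneg by (meson mult_left_mono order_trans)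
  qed auto
  then show ?thesis by (simp add: power2_eq_square mult_ac)
qed

text \<open>The two bounds on the speed follow by comparing the bi-Lipschitz bounds with the
  linearization on a step of length \<open>h\<close>, chosen so small that the error \<open>K h\<^sup>2\<close> is negligible.\<close>

lemma norm_f'_le: "norm (f' x) \<le> L2"
proof (rule ccontr)
  assume "\<not> norm (f' x) \<le> L2"
  define h where "h = (norm (f' x) - L2) / (K + 1)"
  have h: "0 < h" "K * h < norm (f' x) - L2"
    using \<open>\<not> norm (f' x) \<le> L2\<close> K_nonneg by (simp_all add: h_def field_simps)
  have "h * norm (f' x) \<le> norm (f (x + h) - f x) + norm (f (x + h) - f x - (x + h - x) *\<^sub>R f' x)"
    using norm_triangle_sub[of "(x + h - x) *\<^sub>R f' x" "f (x + h) - f x"] h(1)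
    by (simp add: norm_minus_commute)
  also have "\<dots> \<le> L2 * h + K * h\<^sup>2"
    using lipschitz[of "x + h" x] linearization[where x=x and y="x + h"] h(1) by simp
  finally have "h * norm (f' x) \<le> h * (L2 + K * h)" by (simp add: power2_eq_square algebra_simps)
  then show False using h by (simp add: mult_le_cancel_left_pos)
qed

lemma norm_f'_ge: "L1 \<le> norm (f' x)"
proof (rule ccontr)
  assume "\<not> L1 \<le> norm (f' x)"
  define h where "h = min (1/2) ((L1 - norm (f' x)) / (K + 1))"
  have "h \<le> 1/2" unfolding h_def by (rule min.cobounded1)
  then have h: "0 < h" "h \<le> 1/2" using \<open>\<not> L1 \<le> norm (f' x)\<close> K_nonneg by (auto simp: h_def)
  have "K * h \<le> K * ((L1 - norm (f' x)) / (K + 1))"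
    using K_nonneg by (intro mult_left_mono) (auto simp: h_def)
  also have "\<dots> < L1 - norm (f' x)"
    using K_nonneg \<open>\<not> L1 \<le> norm (f' x)\<close> by (simp add: field_simps)
  finally have Kh: "K * h < L1 - norm (f' x)" .
  have "L1 * h \<le> norm (f (x + h) - f x)"
    using bilipschitz(1)[of "x + h" x] h circ_dist_eq_diff[where x="x + h" and y=x] by simp
  also have "\<dots> \<le> norm ((x + h - x) *\<^sub>R f' x) + norm (f (x + h) - f x - (x + h - x) *\<^sub>R f' x)"
    by (rule norm_triangle_sub)
  also have "\<dots> \<le> h * norm (f' x) + K * h\<^sup>2"
    using linearization[where x=x and y="x + h"] h by simp
  finally have "h * L1 \<le> h * (norm (f' x) + K * h)" by (simp add: power2_eq_square algebra_simps)
  then show False using h(1) Kh by (simp add: mult_le_cancel_left_pos)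
qed

lemma f'_nonzero: "f' x \<noteq> 0"
  using norm_f'_ge[of x] L1_pos by auto

lemma tangent_periodic_of_int: "tangent (x + of_int n) = tangent x"
  by (simp add: tangent_def f'_periodic_of_int)

lemma continuous_on_tangent: "continuous_on S tangent"
  unfolding tangent_def using f'_nonzero by (intro continuous_intros continuous_on_f') auto

lemma tangent_lipschitz: "norm (tangent x - tangent y) \<le> tangent_lip * \<bar>x - y\<bar>"
proof -
  have "norm (tangent x - tangent y) \<le> 2 * norm (f' x - f' y) / norm (f' y)"
    unfolding tangent_def by (rule norm_normalize_diff_le[OF f'_nonzero])
  also have "\<dots> \<le> 2 * (K * \<bar>x - y\<bar>) / L1"
    using norm_f'_ge[of y] L1_pos derivative_lipschitz[of x y] K_nonneg by (intro frac_le) auto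
  finally show ?thesis by (simp add: tangent_lip_def)
qed

lemma tangent_diff_le_chord: "norm (tangent x - tangent y) \<le> (tangent_lip / L1) * norm (f x - f y)"
proof -
  obtain n where n: "\<bar>x - (y + of_int n)\<bar> = circ_dist x y" using circ_dist_attained by blast
  have "norm (tangent x - tangent y) = norm (tangent x - tangent (y + of_int n))"
    by (simp add: tangent_periodic_of_int)
  also have "\<dots> \<le> tangent_lip * circ_dist x y" using tangent_lipschitz[of x "y + of_int n"] n by simp
  also have "\<dots> \<le> tangent_lip * (norm (f x - f y) / L1)"
    using bilipschitz(1)[of x y] L1_pos tangent_lip_nonneg by (intro mult_left_mono) (auto simp: field_simps)
  finally show ?thesis by simp
qed

end

section \<open>Arc length and the arc-length parametrization\<close>

context bilipschitz_curve
begin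

definition arclen_inv :: "real \<Rightarrow> real" where
  "arclen_inv = inv_into {0..1} (arclen f)"

lemma continuous_on_speed: "continuous_on S (\<lambda>u. norm (f' u))"
  by (intro continuous_intros continuous_on_f')

lemma speed_integrable: "(\<lambda>u. norm (f' u)) integrable_on {a..b}"
  by (rule integrable_continuous_real[OF continuous_on_speed])

lemma arclen_eq_integral: "arclen f = (\<lambda>t. integral {0..t} (\<lambda>u. norm (f' u)))"
  unfolding arclen_def vector_derivative_eq ..

lemma arclen_diff:
  assumes "0 \<le> x" "x \<le> y"
  shows "arclen f y - arclen f x = integral {x..y} (\<lambda>u. norm (f' u))"
  using Henstock_Kurzweil_Integration.integral_combine[OF assms speed_integrable]
  by (simp add: arclen_eq_integral)

lemma arclen_diff_bounds:
  assumes "0 \<le> x" "x \<le> y"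
  shows "L1 * (y - x) \<le> arclen f y - arclen f x" "arclen f y - arclen f x \<le> L2 * (y - x)"
proof -
  have "integral {x..y} (\<lambda>_. L1) \<le> integral {x..y} (\<lambda>u. norm (f' u))"
    by (rule integral_le) (auto simp: speed_integrable norm_f'_ge)
  then show "L1 * (y - x) \<le> arclen f y - arclen f x"
    using assms by (simp add: arclen_diff mult.commute)
  have "integral {x..y} (\<lambda>u. norm (f' u)) \<le> integral {x..y} (\<lambda>_. L2)"
    by (rule integral_le) (auto simp: speed_integrable norm_f'_le)
  then show "arclen f y - arclen f x \<le> L2 * (y - x)"
    using assms by (simp add: arclen_diff mult.commute)
qed

lemma arclen_linearization:
  assumes "0 \<le> x" "x \<le> y"
  shows "\<bar>arclen f y - arclen f x - (y - x) * norm (f' x)\<bar> \<le> K * (y - x)\<^sup>2"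
proof -
  have int: "((\<lambda>u. norm (f' u) - norm (f' x)) has_integral
      (integral {x..y} (\<lambda>u. norm (f' u)) - (y - x) * norm (f' x))) {x..y}"
    using has_integral_diff[OF integrable_integral[OF speed_integrable]
        has_integral_const_real[of "norm (f' x)" x y]] assms
    by simp
  have bound: "norm (norm (f' u) - norm (f' x)) \<le> K * (y - x)" if "u \<in> {x..y} - {}" for u
  proof -
    have "\<bar>norm (f' u) - norm (f' x)\<bar> \<le> K * \<bar>u - x\<bar>"
      by (rule order_trans[OF norm_triangle_ineq3 derivative_lipschitz])
    moreover have "K * \<bar>u - x\<bar> \<le> K * (y - x)"
      using that K_nonneg by (intro mult_left_mono) auto
    ultimately show ?thesis by simp
  qed
  have "norm (integral {x..y} (\<lambda>u. norm (f' u)) - (y - x) * norm (f' x)) \<le> K * (y - x) * (y - x)"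
    using has_integral_bound_real[OF _ finite.emptyI int bound] K_nonneg assms by simp
  then show ?thesis using assms by (simp add: arclen_diff power2_eq_square mult.assoc)
qed

lemma arclen_0 [simp]: "arclen f 0 = 0"
  by (simp add: arclen_def)

lemma arclen_strict_mono: "0 \<le> x \<Longrightarrow> x < y \<Longrightarrow> arclen f x < arclen f y"
  using arclen_diff_bounds(1)[of x y] mult_pos_pos[OF L1_pos, of "y - x"] by linarith

lemma arclen_less_iff: "0 \<le> x \<Longrightarrow> 0 \<le> y \<Longrightarrow> arclen f x < arclen f y \<longleftrightarrow> x < y"
  using arclen_strict_mono by (metis linorder_neqE_linordered_idom order_less_asym)

lemma arclen_le_iff: "0 \<le> x \<Longrightarrow> 0 \<le> y \<Longrightarrow> arclen f x \<le> arclen f y \<longleftrightarrow> x \<le> y"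
  using arclen_less_iff[of y x] by linarith

lemma arclen_nonneg: "0 \<le> x \<Longrightarrow> 0 \<le> arclen f x"
  using arclen_le_iff[of 0 x] by simp

lemma curve_length_pos: "0 < curve_length f"
  using arclen_strict_mono[of 0 1] by (simp add: curve_length_def)

lemma arclen_add_1: "0 \<le> t \<Longrightarrow> arclen f (t + 1) = arclen f t + curve_length f"
proof -
  assume "0 \<le> t"
  have "arclen f (t + 1) = integral {0..1} (\<lambda>u. norm (f' u)) + integral {1..t+1} (\<lambda>u. norm (f' u))"
    using Henstock_Kurzweil_Integration.integral_combine[of 0 1 "t + 1" "\<lambda>u. norm (f' u)"]
      \<open>0 \<le> t\<close> speed_integrable
    by (simp add: arclen_eq_integral)
  also have "integral {1..t+1} (\<lambda>u. norm (f' u)) = integral {0..t} (\<lambda>u. norm (f' (1 + u)))"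
    using integral_shift_Icc_real[of 0 t "\<lambda>u. norm (f' u)" 1] by (simp add: add.commute o_def)
  also have "(\<lambda>u. norm (f' (1 + u))) = (\<lambda>u. norm (f' u))"
    using f'_periodic by (simp add: add.commute)
  finally show ?thesis by (simp add: arclen_eq_integral curve_length_def)
qed

lemma arclen_has_derivative: "0 < t \<Longrightarrow> (arclen f has_real_derivative norm (f' t)) (at t)"
proof -
  assume "0 < t"
  have "((\<lambda>x. integral {0..x} (\<lambda>u. norm (f' u))) has_real_derivative norm (f' t)) (at t within {0..t+1})"
    by (rule integral_has_real_derivative[OF continuous_on_speed]) (use \<open>0 < t\<close> in auto)
  moreover have "t \<in> interior {0..t+1}" using \<open>0 < t\<close> by auto
  ultimately show ?thesis unfolding arclen_eq_integral by (simp only: at_within_interior)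
qed

lemma continuous_on_arclen: "continuous_on {0..b} (arclen f)"
  unfolding arclen_eq_integral
  by (rule DERIV_continuous_on[OF integral_has_real_derivative[OF continuous_on_speed]])

lemma inj_on_arclen: "inj_on (arclen f) {0..1}"
proof (rule inj_onI)
  fix x y assume "x \<in> {0..1}" "y \<in> {0..1}" "arclen f x = arclen f y"
  then show "x = y" using arclen_less_iff[of x y] arclen_less_iff[of y x] by auto
qed

lemma arclen_image: "arclen f ` {0..1} = {0..curve_length f}"
proof
  show "arclen f ` {0..1} \<subseteq> {0..curve_length f}"
    using arclen_le_iff arclen_nonneg by (auto simp: curve_length_def)
  show "{0..curve_length f} \<subseteq> arclen f ` {0..1}"
  proof
    fix s assume "s \<in> {0..curve_length f}"
    then obtain x where "0 \<le> x" "x \<le> 1" "arclen f x = s"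
      using IVT'[of "arclen f" 0 s 1] continuous_on_arclen by (auto simp: curve_length_def)
    then show "s \<in> arclen f ` {0..1}" by auto
  qed
qed

lemma arclen_inv_in: "s \<in> {0..curve_length f} \<Longrightarrow> arclen_inv s \<in> {0..1}"
  unfolding arclen_inv_def using arclen_image by (metis inv_into_into)

lemma arclen_arclen_inv: "s \<in> {0..curve_length f} \<Longrightarrow> arclen f (arclen_inv s) = s"
  unfolding arclen_inv_def using arclen_image by (metis f_inv_into_f)

lemma arclen_inv_arclen: "t \<in> {0..1} \<Longrightarrow> arclen_inv (arclen f t) = t"
  unfolding arclen_inv_def using inj_on_arclen by (rule inv_into_f_f)

lemma continuous_on_arclen_inv: "continuous_on {0..curve_length f} arclen_inv"
  using continuous_on_inv[OF continuous_on_arclen[of 1] compact_Icc, of arclen_inv]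
    arclen_inv_arclen arclen_image
  by simp

lemma arclen_inv_bounds:
  assumes "s \<in> {0<..<curve_length f}"
  shows "0 < arclen_inv s" "arclen_inv s < 1"
proof -
  have "arclen_inv s \<in> {0..1}" "arclen f (arclen_inv s) = s"
    using assms arclen_inv_in arclen_arclen_inv by auto
  moreover from this have "arclen_inv s \<noteq> 0" "arclen_inv s \<noteq> 1"
    using assms by (auto simp: curve_length_def)
  ultimately show "0 < arclen_inv s" "arclen_inv s < 1" by auto
qed

lemma arclen_inv_has_derivative:
  assumes "s \<in> {0<..<curve_length f}"
  shows "(arclen_inv has_real_derivative inverse (norm (f' (arclen_inv s)))) (at s)"
proof (rule DERIV_inverse_function[where f="arclen f" and a=0 and b="curve_length f"])
  show "(arclen f has_real_derivative norm (f' (arclen_inv s))) (at (arclen_inv s))"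
    using arclen_inv_bounds(1)[OF assms] by (rule arclen_has_derivative)
  show "norm (f' (arclen_inv s)) \<noteq> 0" using f'_nonzero by simp
  show "\<And>y. 0 < y \<Longrightarrow> y < curve_length f \<Longrightarrow> arclen f (arclen_inv y) = y"
    using arclen_arclen_inv by auto
  have "s \<in> interior {0..curve_length f}" using assms by auto
  then show "isCont arclen_inv s"
    using continuous_on_interior[OF continuous_on_arclen_inv] by blast
qed (use assms in auto)

lemma arclen_param_eq: "arclen_param f = f \<circ> arclen_inv"
  by (simp add: arclen_param_def arclen_inv_def)

lemma arclen_param_derivative:
  assumes "s \<in> {0<..<curve_length f}"
  shows "vector_derivative (arclen_param f) (at s) = tangent (arclen_inv s)"
proof -
  have "(arclen_inv has_vector_derivative inverse (norm (f' (arclen_inv s)))) (at s)"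
    using arclen_inv_has_derivative[OF assms] by (simp add: has_real_derivative_iff_has_vector_derivative)
  then have "((f \<circ> arclen_inv) has_vector_derivative
      (inverse (norm (f' (arclen_inv s))) *\<^sub>R f' (arclen_inv s))) (at s)"
    by (rule vector_diff_chain_at) (rule has_derivative)
  then show ?thesis
    by (simp add: vector_derivative_at arclen_param_eq tangent_def divide_inverse_commute)
qed

end

section \<open>Equilateral inscribed polygons\<close>

locale equilateral_polygon = bilipschitz_curve f f' K L1 L2
  for f f' :: "real \<Rightarrow> 'a::euclidean_space" and K L1 L2 :: real +
  fixes \<theta> :: "nat \<Rightarrow> real" and m :: nat
  assumes two_le_m: "2 \<le> m"
    and \<theta>_0_nonneg: "0 \<le> \<theta> 0"
    and \<theta>_increasing: "Suc k < m \<Longrightarrow> \<theta> k < \<theta> (Suc k)"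
    and \<theta>_last_less_1: "\<theta> (m - 1) < 1"
    and equilateral: "k < m \<Longrightarrow> norm (Delta1 f \<theta> m k) = (\<Sum>l<m. norm (Delta1 f \<theta> m l)) / real m"
begin

text \<open>The paper's convention \<open>\<theta>\<^sub>k\<^sub>+\<^sub>m = \<theta>\<^sub>k + 1\<close>, extended to all indices \<open>k \<ge> 0\<close>.\<close>

definition theta_ext :: "nat \<Rightarrow> real" where
  "theta_ext k = \<theta> (k mod m) + real (k div m)"

definition side :: real where
  "side = (\<Sum>l<m. norm (Delta1 f \<theta> m l)) / real m"

definition gap :: "nat \<Rightarrow> real" where
  "gap k = theta_ext (Suc k) - theta_ext k"

definition edge_dir :: "nat \<Rightarrow> 'a" where
  "edge_dir k = Delta1 f \<theta> m k /\<^sub>R norm (Delta1 f \<theta> m k)"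

lemma m_pos: "0 < m"
  using two_le_m by simp

lemma theta_ext_eq: "k < m \<Longrightarrow> theta_ext k = \<theta> k"
  by (simp add: theta_ext_def)

lemma theta_ext_add_mult: "theta_ext (r + q * m) = theta_ext r + real q"
  using m_pos by (simp add: theta_ext_def)

lemma theta_ext_add_m: "theta_ext (k + m) = theta_ext k + 1"
  using theta_ext_add_mult[of k 1] by simp

lemma theta_ext_m: "theta_ext m = \<theta> 0 + 1"
  using theta_ext_add_m[of 0] m_pos by (simp add: theta_ext_eq)

lemma \<theta>_strict_mono: "i < j \<Longrightarrow> j < m \<Longrightarrow> \<theta> i < \<theta> j"
proof (induction j)
  case (Suc j)
  then show ?case using \<theta>_increasing by (cases "i = j") (auto intro: less_trans)
qed simp

lemma \<theta>_bounds: "k < m \<Longrightarrow> 0 \<le> \<theta> k \<and> \<theta> k < 1"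
proof -
  assume "k < m"
  have "\<theta> 0 \<le> \<theta> k" using \<theta>_strict_mono[of 0 k] \<open>k < m\<close> by (cases "k = 0") auto
  moreover have "\<theta> k \<le> \<theta> (m - 1)"
    using \<theta>_strict_mono[of k "m - 1"] \<open>k < m\<close> by (cases "k = m - 1") (auto, linarith)
  ultimately show ?thesis using \<theta>_0_nonneg \<theta>_last_less_1 by simp
qed

lemma theta_ext_less_Suc: "theta_ext k < theta_ext (Suc k)"
proof -
  define r q where "r = k mod m" and "q = k div m"
  have k: "k = r + q * m" and r: "r < m" using m_pos by (simp_all add: r_def q_def)
  have "theta_ext r < theta_ext (Suc r)"
  proof (cases "Suc r < m")
    case True
    then show ?thesis using \<theta>_increasing r by (simp add: theta_ext_eq)
  next
    case False
    then have "r = m - 1" "Suc r = m" using r by auto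
    then show ?thesis using theta_ext_m \<theta>_last_less_1 r \<theta>_0_nonneg by (simp add: theta_ext_eq)
  qed
  then show ?thesis using theta_ext_add_mult[of r q] theta_ext_add_mult[of "Suc r" q] k by simp
qed

lemma strict_mono_theta_ext: "strict_mono theta_ext"
  by (rule strict_monoI_Suc) (rule theta_ext_less_Suc)

lemma theta_ext_less: "i < j \<Longrightarrow> theta_ext i < theta_ext j"
  using strict_mono_theta_ext by (simp add: strict_mono_less)

lemma theta_ext_le: "i \<le> j \<Longrightarrow> theta_ext i \<le> theta_ext j"
  using strict_mono_theta_ext by (simp add: strict_mono_less_eq)

lemma theta_ext_nonneg: "0 \<le> theta_ext k"
  using theta_ext_le[of 0 k] \<theta>_0_nonneg m_pos by (simp add: theta_ext_eq)

lemma cyc_pt_eq: "cyc_pt f \<theta> m k = f (theta_ext k)"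
  using periodic_of_int[of "\<theta> (k mod m)" "int (k div m)"] by (simp add: cyc_pt_def theta_ext_def)

lemma Delta_eq: "Delta f \<theta> m i j = f (theta_ext j) - f (theta_ext i)"
  by (simp add: Delta_def cyc_pt_eq)

lemma Delta1_eq: "Delta1 f \<theta> m k = f (theta_ext (Suc k)) - f (theta_ext k)"
  by (simp add: Delta1_def Delta_eq)

lemma norm_Delta1: "norm (Delta1 f \<theta> m k) = side"
proof -
  have "Delta1 f \<theta> m k = Delta1 f \<theta> m (k mod m)"
    unfolding Delta1_def Delta_def cyc_pt_def by (simp add: mod_Suc_eq)
  then show ?thesis using equilateral[of "k mod m"] m_pos by (simp add: side_def)
qed

lemma gap_pos: "0 < gap k"
  using theta_ext_less_Suc by (simp add: gap_def)

lemma gap_less_1: "gap k < 1"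
  using theta_ext_less[of "Suc k" "k + m"] two_le_m by (simp add: gap_def theta_ext_add_m)

lemma sum_gap: "a \<le> b \<Longrightarrow> (\<Sum>j = a..<b. gap j) = theta_ext b - theta_ext a"
  unfolding gap_def by (rule sum_Suc_diff')

lemma sum_gap_period: "(\<Sum>k<m. gap k) = 1"
  using sum_gap[of 0 m] m_pos by (simp add: atLeast0LessThan theta_ext_m theta_ext_eq)

lemma side_le_gap: "side \<le> L2 * gap k"
  using lipschitz[of "theta_ext (Suc k)" "theta_ext k"] gap_pos[of k]
  by (simp add: norm_Delta1[of k, symmetric] Delta1_eq gap_def)

lemma gap_ge: "side / L2 \<le> gap k"
  using side_le_gap[of k] L2_pos by (simp add: field_simps)

lemma side_pos: "0 < side"
proof -
  have "0 < circ_dist (theta_ext 1) (theta_ext 0)"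
    using gap_pos[of 0] gap_less_1[of 0] by (intro circ_dist_pos) (auto simp: gap_def)
  then have "0 < L1 * circ_dist (theta_ext 1) (theta_ext 0)" using L1_pos by simp
  also have "\<dots> \<le> norm (f (theta_ext 1) - f (theta_ext 0))" by (rule bilipschitz(1))
  also have "\<dots> = side" using norm_Delta1[of 0] Delta1_eq[of 0] by simp
  finally show ?thesis .
qed

lemma side_le: "side \<le> L2 / real m"
proof -
  have "real m * side \<le> (\<Sum>k<m. L2 * gap k)"
    using sum_mono[of "{..<m}" "\<lambda>_. side", OF side_le_gap] by simp
  also have "\<dots> = L2" by (simp add: sum_distrib_left[symmetric] sum_gap_period)
  finally show ?thesis using m_pos by (simp add: field_simps)
qed

lemma circ_dist_theta_ext_mod:
  "circ_dist (theta_ext i) (theta_ext j) = circ_dist (theta_ext (i mod m)) (theta_ext (j mod m))"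
proof -
  have "theta_ext k = theta_ext (k mod m) + of_int (int (k div m))" for k
    using theta_ext_add_mult[of "k mod m" "k div m"] by simp
  then show ?thesis by (metis circ_dist_add_of_int circ_dist_commute)
qed

text \<open>Between two distinct vertices lies at least one full gap, on either side of the circle.\<close>

lemma circ_dist_theta_ext_ge:
  assumes "i mod m \<noteq> j mod m"
  shows "side / L2 \<le> circ_dist (theta_ext i) (theta_ext j)"
proof -
  have ordered: "side / L2 \<le> circ_dist (theta_ext j) (theta_ext i)" if "i < j" "j < m" for i j
  proof -
    define d where "d = theta_ext j - theta_ext i"
    have d1: "gap i \<le> d" using theta_ext_le[of "Suc i" j] that by (simp add: d_def gap_def)
    have d2: "gap j \<le> 1 - d"
      using theta_ext_le[of "Suc j" "i + m"] that by (simp add: d_def gap_def theta_ext_add_m)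
    have "frac d = d" using d1 d2 gap_pos[of i] gap_pos[of j] by (simp add: frac_eq)
    then have "circ_dist (theta_ext j) (theta_ext i) = min d (1 - d)" by (simp add: circ_dist_def d_def)
    then show ?thesis using d1 d2 gap_ge[of i] gap_ge[of j] by simp
  qed
  have "i mod m < m" "j mod m < m" using m_pos by auto
  then have "side / L2 \<le> circ_dist (theta_ext (i mod m)) (theta_ext (j mod m))"
    using ordered[of "i mod m" "j mod m"] ordered[of "j mod m" "i mod m"] assms
    by (cases "i mod m < j mod m") (auto simp: circ_dist_commute)
  then show ?thesis by (simp add: circ_dist_theta_ext_mod[of i j])
qed

lemma norm_Delta_ge:
  assumes "i mod m \<noteq> j mod m"
  shows "(L1 / L2) * side \<le> norm (Delta f \<theta> m i j)"
proof -
  have "L1 * (side / L2) \<le> L1 * circ_dist (theta_ext j) (theta_ext i)"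
    using circ_dist_theta_ext_ge[of j i] assms L1_pos by (intro mult_left_mono) auto
  also have "\<dots> \<le> norm (f (theta_ext j) - f (theta_ext i))" by (rule bilipschitz(1))
  finally show ?thesis by (simp add: Delta_eq)
qed

lemma norm_Delta_pos: "i mod m \<noteq> j mod m \<Longrightarrow> 0 < norm (Delta f \<theta> m i j)"
  using norm_Delta_ge[of i j] mult_pos_pos[OF divide_pos_pos[OF L1_pos L2_pos] side_pos] by linarith

lemma norm_edge_dir: "norm (edge_dir k) = 1"
  using side_pos by (simp add: edge_dir_def norm_Delta1)

lemma edge_dir_tangent_start: "norm (edge_dir k - tangent (theta_ext k)) \<le> tangent_lip * gap k"
proof -
  define w where "w = f (theta_ext (Suc k)) - f (theta_ext k)"
  define a where "a = w /\<^sub>R gap k"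
  have g: "0 < gap k" by (rule gap_pos)
  have "norm (a - f' (theta_ext k)) = norm (w - gap k *\<^sub>R f' (theta_ext k)) / gap k"
  proof -
    have "a - f' (theta_ext k) = (1 / gap k) *\<^sub>R (w - gap k *\<^sub>R f' (theta_ext k))"
      using g by (simp add: a_def scaleR_right_diff_distrib divide_inverse)
    then show ?thesis using g by simp
  qed
  also have "\<dots> \<le> K * (gap k)\<^sup>2 / gap k"
    using linearization[where x="theta_ext k" and y="theta_ext (Suc k)"] g
    by (intro divide_right_mono) (auto simp: w_def gap_def)
  also have "\<dots> = K * gap k" using g by (simp add: power2_eq_square)
  finally have a: "norm (a - f' (theta_ext k)) \<le> K * gap k" .
  have "edge_dir k = a /\<^sub>R norm a"
    using g by (simp add: edge_dir_def Delta1_eq w_def a_def)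
  then have "norm (edge_dir k - tangent (theta_ext k))
      \<le> 2 * norm (a - f' (theta_ext k)) / norm (f' (theta_ext k))"
    unfolding tangent_def by (simp only: norm_normalize_diff_le[OF f'_nonzero])
  also have "\<dots> \<le> 2 * (K * gap k) / L1"
    using a norm_f'_ge[of "theta_ext k"] L1_pos K_nonneg g by (intro frac_le) auto
  finally show ?thesis by (simp add: tangent_lip_def)
qed

lemma edge_dir_tangent:
  assumes "theta_ext k \<le> x" "x \<le> theta_ext (Suc k)"
  shows "norm (edge_dir k - tangent x) \<le> 2 * tangent_lip * gap k"
proof -
  have "tangent_lip * \<bar>theta_ext k - x\<bar> \<le> tangent_lip * gap k"
    using assms tangent_lip_nonneg by (intro mult_left_mono) (auto simp: gap_def)
  then have "norm (tangent (theta_ext k) - tangent x) \<le> tangent_lip * gap k"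
    using tangent_lipschitz[of "theta_ext k" x] by linarith
  from norm_diff_triangle_le[OF edge_dir_tangent_start this] show ?thesis by simp
qed

lemma P1_eq: "2 * P1 f \<theta> m i j =
    side\<^sup>2 * ((norm (edge_dir i - edge_dir j))\<^sup>2 + (norm (edge_dir (Suc i) - edge_dir (Suc j)))\<^sup>2) /
      (2 * (norm (Delta f \<theta> m i j) * norm (Delta f \<theta> m (Suc i) (Suc j))))"
proof -
  have dir: "(\<lambda>k. Delta1 f \<theta> m k /\<^sub>R norm (Delta1 f \<theta> m k)) = edge_dir"
    by (simp add: edge_dir_def[abs_def])
  have "2 * P1 f \<theta> m i j =
      side * side / (norm (Delta f \<theta> m i j) * norm (Delta f \<theta> m (Suc i) (Suc j))) *
      ((1 - edge_dir i \<bullet> edge_dir j) + (1 - edge_dir (Suc i) \<bullet> edge_dir (Suc j)))"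
    unfolding P1_def Let_def dir by (simp add: norm_Delta1)
  then show ?thesis by (simp add: one_minus_inner_eq norm_edge_dir power2_eq_square field_simps)
qed

lemma P1_nonneg: "0 \<le> P1 f \<theta> m i j"
proof -
  have "0 \<le> 2 * P1 f \<theta> m i j" unfolding P1_eq by simp
  then show ?thesis by simp
qed

end

context bilipschitz_curve
begin

definition chord_const :: real where
  "chord_const = (4 * L2 / L1\<^sup>2 + 1 / L1) * tangent_lip"

definition shift_const :: real where
  "shift_const = 1 + 2 * L2 / L1"

definition step_bound :: real where
  "step_bound = chord_const\<^sup>2 * (1 + shift_const) * L2\<^sup>2 / (2 * L1\<^sup>2)"

definition cell_const :: real where
  "cell_const = (2 * tangent_lip + L2) / L1"

lemma step_bound_nonneg: "0 \<le> step_bound"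
  using L1_pos L2_pos by (simp add: step_bound_def shift_const_def)

end

text \<open>Fineness forces every parameter gap to be at most \<open>1/2\<close>, so that the circle distance of consecutive
  vertices is their parameter gap and the lower bi-Lipschitz bound controls it.\<close>

locale fine_polygon = equilateral_polygon +
  assumes fine: "L2 < (real m - 1) * L1"
begin

lemma gap_le_half: "gap k \<le> 1/2"
proof (rule ccontr)
  assume "\<not> gap k \<le> 1/2"
  have "frac (gap k) = gap k" using gap_pos[of k] gap_less_1[of k] by (simp add: frac_eq)
  then have "circ_dist (theta_ext (Suc k)) (theta_ext k) = 1 - gap k"
    using \<open>\<not> gap k \<le> 1/2\<close> by (simp add: circ_dist_def gap_def)
  then have "L1 * (1 - gap k) \<le> side"
    using bilipschitz(1)[of "theta_ext (Suc k)" "theta_ext k"] norm_Delta1[of k] Delta1_eq[of k] by simp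
  moreover have "1 - gap k = (\<Sum>j = Suc k..<k + m. gap j)"
    using sum_gap[of "Suc k" "k + m"] two_le_m by (simp add: theta_ext_add_m gap_def)
  moreover have "(real m - 1) * (side / L2) \<le> (\<Sum>j = Suc k..<k + m. gap j)"
    using sum_mono[of "{Suc k..<k + m}" "\<lambda>_. side / L2" gap, OF gap_ge] two_le_m
    by simp
  ultimately have "L1 * ((real m - 1) * (side / L2)) \<le> side"
    using mult_left_mono[of "(real m - 1) * (side / L2)" "1 - gap k" L1] L1_pos by simp
  then have "(real m - 1) * L1 * side \<le> L2 * side"
    using L2_pos by (simp add: pos_divide_le_eq mult_ac)
  then have "(real m - 1) * L1 \<le> L2" using side_pos by simp
  then show False using fine by simp
qed

lemma circ_dist_consecutive: "circ_dist (theta_ext (Suc k)) (theta_ext k) = gap k"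
  using gap_le_half[of k] gap_pos[of k] by (simp add: circ_dist_eq_diff gap_def)

lemma gap_le: "gap k \<le> side / L1"
  using bilipschitz(1)[of "theta_ext (Suc k)" "theta_ext k"] L1_pos
  by (simp add: circ_dist_consecutive norm_Delta1[of k, symmetric] Delta1_eq field_simps)

lemma side_le_norm_Delta: "i mod m \<noteq> j mod m \<Longrightarrow> side \<le> (L2 / L1) * norm (Delta f \<theta> m i j)"
  using norm_Delta_ge[of i j] L1_pos L2_pos by (simp add: field_simps)

text \<open>The hypothesis on the chord lets the errors of order \<open>side\<close>, made in replacing the edge directions
  by tangents, be absorbed into the chord length.\<close>

lemma edge_dir_diff_le_chord:
  assumes "x \<in> {theta_ext i..theta_ext (Suc i)}" "y \<in> {theta_ext j..theta_ext (Suc j)}"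
    and short: "side \<le> (L2 / L1) * norm (f x - f y)"
  shows "norm (edge_dir i - edge_dir j) \<le> chord_const * norm (f x - f y)"
proof -
  define N where "N = norm (f x - f y)"
  have "norm (edge_dir i - edge_dir j)
      \<le> norm (edge_dir i - tangent x) + norm (tangent x - tangent y) + norm (edge_dir j - tangent y)"
    by (metis norm_diff_triangle_le norm_minus_commute order_refl)
  also have "\<dots> \<le> 2 * tangent_lip * (gap i + gap j) + (tangent_lip / L1) * N"
    using edge_dir_tangent[of i x] edge_dir_tangent[of j y] tangent_diff_le_chord[of x y] assms(1,2)
    by (simp add: algebra_simps N_def)
  also have "\<dots> \<le> 2 * tangent_lip * (2 * ((L2 / L1) * N / L1)) + (tangent_lip / L1) * N"
  proof -
    have "gap i + gap j \<le> 2 * (side / L1)" using gap_le[of i] gap_le[of j] by simp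
    also have "\<dots> \<le> 2 * ((L2 / L1) * N / L1)"
      using divide_right_mono[OF short, of L1] L1_pos by (simp add: N_def)
    finally have "2 * tangent_lip * (gap i + gap j) \<le> 2 * tangent_lip * (2 * ((L2 / L1) * N / L1))"
      using tangent_lip_nonneg by (intro mult_left_mono) auto
    then show ?thesis by simp
  qed
  also have "\<dots> = chord_const * N"
    using L1_pos by (simp add: chord_const_def power2_eq_square field_simps)
  finally show ?thesis by (simp add: N_def)
qed

lemma norm_Delta_Suc_le:
  assumes "i mod m \<noteq> j mod m"
  shows "norm (Delta f \<theta> m (Suc i) (Suc j)) \<le> shift_const * norm (Delta f \<theta> m i j)"
proof -
  have "Delta f \<theta> m (Suc i) (Suc j) = Delta f \<theta> m i j + Delta1 f \<theta> m j - Delta1 f \<theta> m i"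
    by (simp add: Delta_eq Delta1_eq algebra_simps)
  then have "norm (Delta f \<theta> m (Suc i) (Suc j)) \<le> norm (Delta f \<theta> m i j) + 2 * side"
    using norm_triangle_ineq4[of "Delta f \<theta> m i j + Delta1 f \<theta> m j" "Delta1 f \<theta> m i"]
      norm_triangle_ineq[of "Delta f \<theta> m i j" "Delta1 f \<theta> m j"] norm_Delta1
    by simp
  moreover have "shift_const * norm (Delta f \<theta> m i j)
      = norm (Delta f \<theta> m i j) + 2 * ((L2 / L1) * norm (Delta f \<theta> m i j))"
    by (simp add: shift_const_def algebra_simps)
  ultimately show ?thesis using side_le_norm_Delta[OF assms] by linarith
qed

lemma P1_le:
  assumes "i mod m \<noteq> j mod m"
  shows "2 * P1 f \<theta> m i j \<le> side\<^sup>2 * (chord_const\<^sup>2 * (1 + shift_const) / 2)"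
proof -
  define d1 d2 where "d1 = norm (Delta f \<theta> m i j)" and "d2 = norm (Delta f \<theta> m (Suc i) (Suc j))"
  have ne: "Suc i mod m \<noteq> Suc j mod m" using Suc_mod_neq[OF m_pos assms] .
  have d: "0 < d1" "0 < d2" "d2 \<le> shift_const * d1"
    using norm_Delta_pos[OF assms] norm_Delta_pos[OF ne] norm_Delta_Suc_le[OF assms]
    by (simp_all add: d1_def d2_def)
  have c: "0 \<le> chord_const"
    using tangent_lip_nonneg L1_pos L2_pos by (simp add: chord_const_def)
  have Delta_chord: "norm (Delta f \<theta> m i j) = norm (f (theta_ext i) - f (theta_ext j))" for i j
    by (simp add: Delta_eq norm_minus_commute)
  have "norm (edge_dir i - edge_dir j) \<le> chord_const * d1"
    using edge_dir_diff_le_chord[of "theta_ext i" i "theta_ext j" j] side_le_norm_Delta[OF assms]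
      theta_ext_less_Suc[of i] theta_ext_less_Suc[of j]
    by (simp add: d1_def Delta_chord)
  moreover have "norm (edge_dir i - edge_dir j) \<le> chord_const * d2"
    using edge_dir_diff_le_chord[of "theta_ext (Suc i)" i "theta_ext (Suc j)" j] side_le_norm_Delta[OF ne]
      theta_ext_less_Suc[of i] theta_ext_less_Suc[of j]
    by (simp add: d2_def Delta_chord)
  moreover have "norm (edge_dir (Suc i) - edge_dir (Suc j)) \<le> chord_const * d2"
    using edge_dir_diff_le_chord[of "theta_ext (Suc i)" "Suc i" "theta_ext (Suc j)" "Suc j"]
      side_le_norm_Delta[OF ne] theta_ext_less_Suc[of "Suc i"] theta_ext_less_Suc[of "Suc j"]
    by (simp add: d2_def Delta_chord)
  ultimately have "(norm (edge_dir i - edge_dir j))\<^sup>2 + (norm (edge_dir (Suc i) - edge_dir (Suc j)))\<^sup>2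
      \<le> (chord_const * d1) * (chord_const * d2) + (chord_const * d2) * (chord_const * (shift_const * d1))"
    unfolding power2_eq_square using c d
    by (intro add_mono mult_mono) (auto intro: order_trans mult_left_mono)
  also have "\<dots> = (chord_const\<^sup>2 * (1 + shift_const) / 2) * (2 * (d1 * d2))"
    by (simp add: power2_eq_square algebra_simps)
  finally show ?thesis
    using P1_eq[of i j] d(1,2) by (simp add: d1_def d2_def divide_le_eq mult.assoc mult_left_mono)
qed

end

section \<open>The discrete energy as the integral of a step function\<close>

context fine_polygon
begin

definition arc_vertex :: "nat \<Rightarrow> real" where
  "arc_vertex k = arclen f (theta_ext k)"

definition arc_side :: "nat \<Rightarrow> real" where
  "arc_side k = arc_vertex (Suc k) - arc_vertex k"

definition cell :: "nat \<Rightarrow> real set" where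
  "cell k = (if Suc k < m then {arc_vertex k..<arc_vertex (Suc k)}
             else {arc_vertex k..<curve_length f} \<union> {0..<arc_vertex 0})"

definition cell_value :: "nat \<Rightarrow> nat \<Rightarrow> real" where
  "cell_value i j = 2 * P1 f \<theta> m i j / (arc_side i * arc_side j)"

definition step_fn :: "real \<times> real \<Rightarrow> real" where
  "step_fn p = (\<Sum>(i, j) \<in> {(i, j). i < m \<and> j < m \<and> i \<noteq> j}. indicator (cell i \<times> cell j) p * cell_value i j)"

lemma arc_vertex_less: "i < j \<Longrightarrow> arc_vertex i < arc_vertex j"
  unfolding arc_vertex_def using theta_ext_less theta_ext_nonneg arclen_strict_mono by blast

lemma arc_vertex_le: "i \<le> j \<Longrightarrow> arc_vertex i \<le> arc_vertex j"
  using arc_vertex_less[of i j] by (cases "i = j") auto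

lemma arc_vertex_bounds: "k < m \<Longrightarrow> 0 \<le> arc_vertex k \<and> arc_vertex k < curve_length f"
  using \<theta>_bounds[of k] arclen_nonneg arclen_strict_mono[of "\<theta> k" 1]
  by (simp add: arc_vertex_def theta_ext_eq curve_length_def)

lemma arc_vertex_m: "arc_vertex m = arc_vertex 0 + curve_length f"
  using arclen_add_1[of "\<theta> 0"] \<theta>_0_nonneg m_pos by (simp add: arc_vertex_def theta_ext_m theta_ext_eq)

lemma arc_side_ge: "L1 * gap k \<le> arc_side k"
  using arclen_diff_bounds(1)[of "theta_ext k" "theta_ext (Suc k)"] theta_ext_nonneg theta_ext_less_Suc[of k]
  by (simp add: arc_side_def arc_vertex_def gap_def)

lemma arc_side_ge_side: "L1 * (side / L2) \<le> arc_side k"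
  using mult_left_mono[OF gap_ge[of k], of L1] L1_pos arc_side_ge[of k] by linarith

lemma arc_side_pos: "0 < arc_side k"
  using arc_side_ge_side[of k] mult_pos_pos[OF L1_pos divide_pos_pos[OF side_pos L2_pos]] by linarith

text \<open>Both the chord and the arc of an edge agree with \<open>gap k * norm (f' (theta_ext k))\<close>
  up to \<open>K * gap k\<^sup>2\<close>.\<close>

lemma side_div_arc_side: "\<bar>side / arc_side k - 1\<bar> \<le> tangent_lip / L1 * side"
proof -
  have g: "0 < gap k" by (rule gap_pos)
  have h: "0 < arc_side k" by (rule arc_side_pos)
  have "\<bar>side - gap k * norm (f' (theta_ext k))\<bar> \<le> K * (gap k)\<^sup>2"
    using norm_triangle_ineq3[of "f (theta_ext (Suc k)) - f (theta_ext k)" "gap k *\<^sub>R f' (theta_ext k)"]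
      linearization[where x="theta_ext k" and y="theta_ext (Suc k)"] g norm_Delta1[of k]
    by (simp add: Delta1_eq gap_def)
  moreover have "\<bar>arc_side k - gap k * norm (f' (theta_ext k))\<bar> \<le> K * (gap k)\<^sup>2"
    using arclen_linearization[of "theta_ext k" "theta_ext (Suc k)"] theta_ext_nonneg theta_ext_less_Suc[of k]
    by (simp add: arc_side_def arc_vertex_def gap_def)
  ultimately have "\<bar>side - arc_side k\<bar> \<le> 2 * K * (gap k)\<^sup>2" by linarith
  moreover have "side / arc_side k - 1 = (side - arc_side k) / arc_side k"
    using h by (simp add: field_simps)
  then have "\<bar>side / arc_side k - 1\<bar> = \<bar>side - arc_side k\<bar> / arc_side k"
    using h by simp
  ultimately have "\<bar>side / arc_side k - 1\<bar> \<le> 2 * K * (gap k)\<^sup>2 / arc_side k"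
    using h by (simp add: divide_right_mono)
  also have "\<dots> \<le> 2 * K * (gap k)\<^sup>2 / (L1 * gap k)"
    using arc_side_ge[of k] g h L1_pos K_nonneg by (intro divide_left_mono) auto
  also have "\<dots> = 2 * K / L1 * gap k" using g by (simp add: power2_eq_square)
  also have "\<dots> \<le> 2 * K / L1 * (side / L1)"
    using gap_le[of k] K_nonneg L1_pos by (intro mult_left_mono) auto
  finally show ?thesis by (simp add: tangent_lip_def)
qed

lemma mem_cell:
  assumes "k < m"
  shows "a \<in> cell k \<longleftrightarrow> a \<in> {0..<curve_length f} \<and>
    (arc_vertex k \<le> a \<and> a < arc_vertex (Suc k) \<or>
     arc_vertex k \<le> a + curve_length f \<and> a + curve_length f < arc_vertex (Suc k))"
proof (cases "Suc k < m")
  case True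
  then show ?thesis
    using arc_vertex_bounds[OF True] arc_vertex_bounds[OF assms] by (auto simp: cell_def)
next
  case False
  then have "Suc k = m" using assms by simp
  then show ?thesis
    using arc_vertex_bounds[of 0] arc_vertex_bounds[OF assms] m_pos arc_vertex_le[of 0 k] arc_vertex_m
    by (auto simp: cell_def)
qed

lemma cell_subset: "k < m \<Longrightarrow> cell k \<subseteq> {0..<curve_length f}"
  using mem_cell by blast

lemma cell_unique:
  assumes "i < m" "j < m" "a \<in> cell i" "a \<in> cell j"
  shows "i = j"
proof -
  have top: "arc_vertex (Suc k) \<le> arc_vertex 0 + curve_length f" if "k < m" for k
    using arc_vertex_le[of "Suc k" m] that arc_vertex_m by simp
  have unique: "i = j" if "arc_vertex i \<le> x" "x < arc_vertex (Suc i)"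
    "arc_vertex j \<le> x" "x < arc_vertex (Suc j)" for x
    using that arc_vertex_le[of "Suc i" j] arc_vertex_le[of "Suc j" i] by (cases i j rule: linorder_cases) auto
  show ?thesis
    using mem_cell[OF assms(1)] mem_cell[OF assms(2)] assms(3,4) arc_vertex_le[of 0 i] arc_vertex_le[of 0 j]
      unique top[OF assms(1)] top[OF assms(2)]
    by auto
qed

lemma cell_cover:
  assumes "a \<in> {0..<curve_length f}"
  shows "\<exists>k<m. a \<in> cell k"
proof (cases "a < arc_vertex 0")
  case True
  then have "a \<in> cell (m - 1)"
    using assms arc_vertex_m arc_vertex_bounds[of "m - 1"] mem_cell[of "m - 1"] m_pos by auto
  then show ?thesis using m_pos by (intro exI[of _ "m - 1"]) auto
next
  case False
  define S where "S = {k. k < m \<and> arc_vertex k \<le> a}"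
  define k where "k = Max S"
  have "finite S" by (simp add: S_def)
  moreover have "k \<in> S" unfolding k_def using \<open>finite S\<close> False m_pos by (intro Max_in) (auto simp: S_def)
  ultimately have k: "k < m" "arc_vertex k \<le> a" "\<And>k'. k' \<in> S \<Longrightarrow> k' \<le> k"
    by (auto simp: S_def k_def)
  have "a < arc_vertex (Suc k)"
  proof (cases "Suc k < m")
    case True
    show ?thesis
    proof (rule ccontr)
      assume "\<not> a < arc_vertex (Suc k)"
      then have "Suc k \<in> S" using True by (simp add: S_def)
      then show False using k(3) by fastforce
    qed
  next
    case False
    then have "Suc k = m" using k(1) by simp
    then show ?thesis using arc_vertex_m assms arc_vertex_bounds[of 0] m_pos by simp
  qed
  then show ?thesis using mem_cell[OF k(1)] assms k by auto
qed

lemma cell_param: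
  assumes "k < m" "a \<in> cell k"
  obtains t where "t = arclen_inv a \<or> t = arclen_inv a + 1" "theta_ext k \<le> t" "t < theta_ext (Suc k)"
proof -
  have a: "a \<in> {0..curve_length f}" "arclen_inv a \<in> {0..1}" "arclen f (arclen_inv a) = a"
    using mem_cell[OF assms(1)] assms(2) arclen_inv_in arclen_arclen_inv by auto
  have a1: "arclen f (arclen_inv a + 1) = a + curve_length f"
    using arclen_add_1[of "arclen_inv a"] a by simp
  have nonneg: "0 \<le> theta_ext k" "0 \<le> theta_ext (Suc k)" by (rule theta_ext_nonneg)+
  consider "arc_vertex k \<le> a \<and> a < arc_vertex (Suc k)"
    | "arc_vertex k \<le> a + curve_length f \<and> a + curve_length f < arc_vertex (Suc k)"
    using mem_cell[OF assms(1)] assms(2) by auto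
  then show ?thesis
  proof cases
    case 1
    then show ?thesis
      using that[of "arclen_inv a"] arclen_le_iff[of "theta_ext k" "arclen_inv a"]
        arclen_less_iff[of "arclen_inv a" "theta_ext (Suc k)"] a nonneg
      by (auto simp: arc_vertex_def)
  next
    case 2
    then show ?thesis
      using that[of "arclen_inv a + 1"] arclen_le_iff[of "theta_ext k" "arclen_inv a + 1"]
        arclen_less_iff[of "arclen_inv a + 1" "theta_ext (Suc k)"] a a1 nonneg
      by (auto simp: arc_vertex_def)
  qed
qed

lemma step_fn_cell:
  assumes "i < m" "j < m" "a \<in> cell i" "b \<in> cell j"
  shows "step_fn (a, b) = (if i \<noteq> j then cell_value i j else 0)"
proof -
  let ?S = "{(i, j). i < m \<and> j < m \<and> i \<noteq> j}"
  have "finite ?S" by (rule finite_subset[of _ "{..<m} \<times> {..<m}"]) auto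
  moreover have "indicator (cell i' \<times> cell j') (a, b) = (if (i', j') = (i, j) then 1 else (0::real))"
    if "(i', j') \<in> ?S" for i' j'
  proof -
    have "a \<in> cell i' \<longleftrightarrow> i' = i" "b \<in> cell j' \<longleftrightarrow> j' = j"
      using that cell_unique[of i' i a] cell_unique[of j' j b] assms by auto
    then show ?thesis by (simp add: indicator_def)
  qed
  ultimately have "step_fn (a, b) = (\<Sum>p\<in>?S. if p = (i, j) then cell_value i j else 0)"
    unfolding step_fn_def by (intro sum.cong) (auto split: if_splits)
  then show ?thesis using \<open>finite ?S\<close> assms by simp
qed

lemma step_fn_outside:
  assumes "a \<notin> {0..<curve_length f} \<or> b \<notin> {0..<curve_length f}"
  shows "step_fn (a, b) = 0"
proof -
  have "indicator (cell i \<times> cell j) (a, b) = (0::real)" if "i < m" "j < m" for i j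
    using that cell_subset[of i] cell_subset[of j] assms by (auto simp: indicator_def)
  then show ?thesis unfolding step_fn_def by (intro sum.neutral) auto
qed

lemma cell_value_bounds:
  assumes "i < m" "j < m" "i \<noteq> j"
  shows "0 \<le> cell_value i j \<and> cell_value i j \<le> step_bound"
proof
  show "0 \<le> cell_value i j"
    unfolding cell_value_def using P1_nonneg[of i j] arc_side_pos[of i] arc_side_pos[of j] by simp
  have low: "L1 * (side / L2) * (L1 * (side / L2)) \<le> arc_side i * arc_side j"
    using arc_side_ge_side[of i] arc_side_ge_side[of j] L1_pos side_pos L2_pos arc_side_pos[of i]
    by (intro mult_mono) auto
  have "0 < L1 * (side / L2) * (L1 * (side / L2))" using L1_pos side_pos L2_pos by simp
  moreover have "0 \<le> chord_const\<^sup>2 * (1 + shift_const) / 2"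
    using L1_pos L2_pos by (simp add: shift_const_def)
  moreover have "2 * P1 f \<theta> m i j \<le> side\<^sup>2 * (chord_const\<^sup>2 * (1 + shift_const) / 2)"
    using assms by (intro P1_le) simp
  ultimately have "cell_value i j \<le> side\<^sup>2 * (chord_const\<^sup>2 * (1 + shift_const) / 2) /
      (L1 * (side / L2) * (L1 * (side / L2)))"
    unfolding cell_value_def using low by (intro frac_le) auto
  also have "\<dots> = step_bound"
    using side_pos L1_pos L2_pos by (simp add: step_bound_def power2_eq_square field_simps)
  finally show "cell_value i j \<le> step_bound" .
qed

lemma step_fn_bounds: "0 \<le> step_fn p \<and> step_fn p \<le> step_bound"
proof (cases p)
  case (Pair a b)
  show ?thesis
  proof (cases "a \<in> {0..<curve_length f} \<and> b \<in> {0..<curve_length f}")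
    case True
    then obtain i j where "i < m" "j < m" "a \<in> cell i" "b \<in> cell j" using cell_cover by meson
    then show ?thesis using step_fn_cell cell_value_bounds step_bound_nonneg Pair by auto
  next
    case False
    then show ?thesis using step_fn_outside step_bound_nonneg Pair by auto
  qed
qed

lemma cell_in_sets: "cell k \<in> sets borel"
  by (simp add: cell_def)

lemma emeasure_cell: "k < m \<Longrightarrow> emeasure lborel (cell k) = ennreal (arc_side k)"
proof (cases "Suc k < m")
  case True
  then show ?thesis
    using emeasure_lborel_Ico[OF arc_vertex_le[of k "Suc k"]] by (simp add: cell_def arc_side_def)
next
  case False
  assume "k < m"
  then have k: "Suc k = m" using False by simp
  have bounds: "0 \<le> arc_vertex 0" "arc_vertex 0 \<le> arc_vertex k" "arc_vertex k < curve_length f"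
    using arc_vertex_bounds[of 0] arc_vertex_bounds[of k] \<open>k < m\<close> m_pos arc_vertex_le[of 0 k] by auto
  have "emeasure lborel ({arc_vertex k..<curve_length f} \<union> {0..<arc_vertex 0})
      = emeasure lborel {arc_vertex k..<curve_length f} + emeasure lborel {0..<arc_vertex 0}"
    using bounds by (intro plus_emeasure[symmetric]) auto
  also have "\<dots> = ennreal (curve_length f - arc_vertex k) + ennreal (arc_vertex 0)"
    using bounds by simp
  also have "\<dots> = ennreal (curve_length f - arc_vertex k + arc_vertex 0)"
    using bounds by (intro ennreal_plus[symmetric]) auto
  also have "curve_length f - arc_vertex k + arc_vertex 0 = arc_side k"
    using k arc_vertex_m by (simp add: arc_side_def)
  finally show ?thesis using False by (simp add: cell_def)
qed

lemma cell_Times_in_sets: "cell i \<times> cell j \<in> sets (lborel :: (real \<times> real) measure)"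
  using cell_in_sets by (simp add: borel_prod[symmetric])

lemma measure_cell_Times: "i < m \<Longrightarrow> j < m \<Longrightarrow>
    measure (lborel :: (real \<times> real) measure) (cell i \<times> cell j) = arc_side i * arc_side j"
  using cell_in_sets emeasure_cell arc_side_pos by (intro measure_lborel_Times) (auto simp: less_imp_le)

lemma step_fn_measurable: "step_fn \<in> borel_measurable lborel"
  unfolding step_fn_def case_prod_unfold
  using cell_Times_in_sets by (intro borel_measurable_sum borel_measurable_times) auto

lemma disc_E1_eq_integral: "disc_E1 f \<theta> m = 1/2 * integral\<^sup>L lborel step_fn"
proof -
  let ?S = "{(i, j). i < m \<and> j < m \<and> i \<noteq> j}"
  have integrable: "integrable lborel (\<lambda>p. indicator (cell i \<times> cell j) p * cell_value i j)"
    if "(i, j) \<in> ?S" for i j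
    using that cell_in_sets emeasure_cell arc_side_pos cell_Times_in_sets
    by (intro integrable_mult_left integrable_real_indicator)
      (auto simp: emeasure_lborel_Times less_imp_le)
  have "integral\<^sup>L lborel step_fn
      = (\<Sum>(i, j)\<in>?S. integral\<^sup>L lborel (\<lambda>p. indicator (cell i \<times> cell j) p * cell_value i j))"
    unfolding step_fn_def case_prod_unfold
    by (rule Bochner_Integration.integral_sum) (use integrable in auto)
  also have "\<dots> = (\<Sum>(i, j)\<in>?S. 2 * P1 f \<theta> m i j)"
    using measure_cell_Times arc_side_pos[THEN less_imp_neq, symmetric]
    by (intro sum.cong refl) (auto simp: cell_value_def)
  finally show ?thesis by (simp add: disc_E1_def sum_distrib_left case_prod_unfold)
qed

end

section \<open>Convergence to the energy\<close>

context fine_polygon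
begin

lemma step_fn_eq:
  assumes "k < m" "k' < m" "a \<in> cell k" "b \<in> cell k'" "k \<noteq> k'"
  shows "step_fn (a, b) = (side / arc_side k) * (side / arc_side k') *
    ((norm (edge_dir k - edge_dir k'))\<^sup>2 + (norm (edge_dir (Suc k) - edge_dir (Suc k')))\<^sup>2) /
    (2 * (norm (f (theta_ext k') - f (theta_ext k)) * norm (f (theta_ext (Suc k')) - f (theta_ext (Suc k)))))"
  using step_fn_cell[OF assms(1-4)] assms(5) P1_eq[of k k'] arc_side_pos[of k] arc_side_pos[of k']
  by (simp add: cell_value_def Delta_eq power2_eq_square field_simps)

lemma cell_approx:
  assumes "k < m" "a \<in> cell k"
  shows "norm (edge_dir k - tangent (arclen_inv a)) \<le> cell_const * side"
    and "norm (edge_dir (Suc k) - tangent (arclen_inv a)) \<le> cell_const * side"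
    and "norm (f (theta_ext k) - f (arclen_inv a)) \<le> cell_const * side"
    and "norm (f (theta_ext (Suc k)) - f (arclen_inv a)) \<le> cell_const * side"
    and "\<bar>side / arc_side k - 1\<bar> \<le> cell_const * side"
proof -
  obtain t where t: "t = arclen_inv a \<or> t = arclen_inv a + 1" "theta_ext k \<le> t" "t < theta_ext (Suc k)"
    using cell_param[OF assms] .
  have tangent_t: "tangent t = tangent (arclen_inv a)"
    using t(1) tangent_periodic_of_int[of "arclen_inv a" 1] by auto
  have f_t: "f t = f (arclen_inv a)" using t(1) periodic by auto
  have dist_t: "\<bar>theta_ext k - t\<bar> \<le> side / L1" "\<bar>theta_ext (Suc k) - t\<bar> \<le> side / L1"
    using t(2,3) gap_le[of k] unfolding gap_def by linarith+
  have scaled: "c * (side / L1) \<le> cell_const * side" if "0 \<le> c" "c \<le> 2 * tangent_lip + L2" for c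
    using mult_right_mono[OF that(2), of "side / L1"] side_pos L1_pos
    by (simp add: cell_const_def)
  have tl: "0 \<le> tangent_lip" by (rule tangent_lip_nonneg)
  have "norm (edge_dir k - tangent t) \<le> 2 * tangent_lip * (side / L1)"
    using edge_dir_tangent[of k t] t(2,3) mult_left_mono[OF gap_le[of k], of "2 * tangent_lip"] tl
    by simp
  then show "norm (edge_dir k - tangent (arclen_inv a)) \<le> cell_const * side"
    using scaled[of "2 * tangent_lip"] tl L2_pos tangent_t by simp
  have "norm (edge_dir (Suc k) - tangent (theta_ext (Suc k))) \<le> tangent_lip * (side / L1)"
    using edge_dir_tangent_start[of "Suc k"] mult_left_mono[OF gap_le[of "Suc k"] tl] by linarith
  moreover have "norm (tangent (theta_ext (Suc k)) - tangent t) \<le> tangent_lip * (side / L1)"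
    using tangent_lipschitz[of "theta_ext (Suc k)" t] mult_left_mono[OF dist_t(2) tl] by linarith
  ultimately have "norm (edge_dir (Suc k) - tangent t) \<le> 2 * tangent_lip * (side / L1)"
    using norm_diff_triangle_le by fastforce
  then show "norm (edge_dir (Suc k) - tangent (arclen_inv a)) \<le> cell_const * side"
    using scaled[of "2 * tangent_lip"] tl L2_pos tangent_t by simp
  show "norm (f (theta_ext k) - f (arclen_inv a)) \<le> cell_const * side"
    using lipschitz[of "theta_ext k" t] mult_left_mono[OF dist_t(1), of L2] L2_pos scaled[of L2] tl f_t
    by simp
  show "norm (f (theta_ext (Suc k)) - f (arclen_inv a)) \<le> cell_const * side"
    using lipschitz[of "theta_ext (Suc k)" t] mult_left_mono[OF dist_t(2), of L2] L2_pos scaled[of L2] tl f_t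
    by simp
  show "\<bar>side / arc_side k - 1\<bar> \<le> cell_const * side"
    using side_div_arc_side[of k] scaled[of tangent_lip] tl L2_pos by simp
qed

end

context bilipschitz_curve
begin

definition energy_density :: "real \<times> real \<Rightarrow> real" where
  "energy_density p = indicator ({0..curve_length f} \<times> {0..curve_length f}) p *\<^sub>R
     ((norm (vector_derivative (arclen_param f) (at (fst p))
             - vector_derivative (arclen_param f) (at (snd p))))\<^sup>2 /
      (norm (arclen_param f (fst p) - arclen_param f (snd p)))\<^sup>2)"

lemma E1_eq_integral: "E1 f = 1/2 * integral\<^sup>L lborel energy_density"
  unfolding E1_def Let_def set_lebesgue_integral_def energy_density_def[abs_def] by simp

lemma energy_density_eq:
  assumes "a \<in> {0<..<curve_length f}" "b \<in> {0<..<curve_length f}"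
  shows "energy_density (a, b) =
    (norm (tangent (arclen_inv a) - tangent (arclen_inv b)))\<^sup>2 / (norm (f (arclen_inv a) - f (arclen_inv b)))\<^sup>2"
  using assms arclen_param_derivative[OF assms(1)] arclen_param_derivative[OF assms(2)]
  by (simp add: energy_density_def arclen_param_eq)

text \<open>At \<open>0\<close> and \<open>L\<close> the derivative of the arc-length parametrization depends on junk values of
  \<open>inv_into\<close> outside \<open>[0, L]\<close>; measurability is therefore shown for a Borel function that agrees
  with the density on the square.\<close>

lemma energy_density_measurable: "energy_density \<in> borel_measurable lborel"
proof -
  define \<tau> where "\<tau> x = vector_derivative (arclen_param f) (at x)" for x
  define \<tau>' where "\<tau>' x = indicator {0<..<curve_length f} x *\<^sub>R tangent (arclen_inv x)
    + indicator {0} x *\<^sub>R \<tau> 0 + indicator {curve_length f} x *\<^sub>R \<tau> (curve_length f)" for x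
  define \<gamma>' where "\<gamma>' x = indicator {0..curve_length f} x *\<^sub>R f (arclen_inv x)" for x
  have "continuous_on {0..curve_length f} (\<lambda>x. tangent (arclen_inv x))"
    by (rule continuous_on_compose2[OF continuous_on_tangent continuous_on_arclen_inv]) auto
  then have "(\<lambda>x. indicator {0<..<curve_length f} x *\<^sub>R tangent (arclen_inv x)) \<in> borel_measurable borel"
    by (intro borel_measurable_continuous_on_indicator) (auto elim: continuous_on_subset)
  then have \<tau>': "\<tau>' \<in> borel_measurable borel"
    unfolding \<tau>'_def by measurable
  have \<gamma>': "\<gamma>' \<in> borel_measurable borel"
    unfolding \<gamma>'_def
    by (intro borel_measurable_continuous_on_indicator continuous_on_compose2[OF continuous_on_f
        continuous_on_arclen_inv]) auto
  have \<tau>_eq: "\<tau>' x = \<tau> x" if "x \<in> {0..curve_length f}" for x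
    using that curve_length_pos arclen_param_derivative[of x]
    by (cases "x = 0"; cases "x = curve_length f") (auto simp: \<tau>'_def \<tau>_def)
  have \<gamma>_eq: "\<gamma>' x = arclen_param f x" if "x \<in> {0..curve_length f}" for x
    using that by (simp add: \<gamma>'_def arclen_param_eq)
  have "(\<lambda>p. indicator ({0..curve_length f} \<times> {0..curve_length f}) p *\<^sub>R
      ((norm (\<tau>' (fst p) - \<tau>' (snd p)))\<^sup>2 / (norm (\<gamma>' (fst p) - \<gamma>' (snd p)))\<^sup>2)) \<in> borel_measurable lborel"
    using \<tau>' \<gamma>' unfolding lborel_prod[symmetric] by measurable
  also have "(\<lambda>p. indicator ({0..curve_length f} \<times> {0..curve_length f}) p *\<^sub>R
      ((norm (\<tau>' (fst p) - \<tau>' (snd p)))\<^sup>2 / (norm (\<gamma>' (fst p) - \<gamma>' (snd p)))\<^sup>2)) = energy_density"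
    by (rule ext) (auto simp: energy_density_def indicator_def \<tau>_eq \<gamma>_eq \<tau>_def)
  finally show ?thesis .
qed

end

context bilipschitz_curve
begin

lemma cell_limits:
  assumes fine: "\<And>n. fine_polygon f f' K L1 L2 (\<theta> n) (M n)"
    and side: "(\<lambda>n. equilateral_polygon.side f (\<theta> n) (M n)) \<longlonglongrightarrow> 0"
    and k: "\<And>n. k n < M n" "\<And>n. a \<in> fine_polygon.cell f (\<theta> n) (M n) (k n)"
  shows "(\<lambda>n. equilateral_polygon.edge_dir f (\<theta> n) (M n) (k n)) \<longlonglongrightarrow> tangent (arclen_inv a)"
    and "(\<lambda>n. equilateral_polygon.edge_dir f (\<theta> n) (M n) (Suc (k n))) \<longlonglongrightarrow> tangent (arclen_inv a)"
    and "(\<lambda>n. f (equilateral_polygon.theta_ext (\<theta> n) (M n) (k n))) \<longlonglongrightarrow> f (arclen_inv a)"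
    and "(\<lambda>n. f (equilateral_polygon.theta_ext (\<theta> n) (M n) (Suc (k n)))) \<longlonglongrightarrow> f (arclen_inv a)"
    and "(\<lambda>n. equilateral_polygon.side f (\<theta> n) (M n) / fine_polygon.arc_side f (\<theta> n) (M n) (k n)) \<longlonglongrightarrow> 1"
  using fine_polygon.cell_approx[OF fine k]
  by (auto intro!: tendsto_of_norm_diff_le[where c=cell_const, OF _ side])

lemma step_fn_tendsto:
  assumes fine: "\<And>n. fine_polygon f f' K L1 L2 (\<theta> n) (M n)"
    and M: "filterlim M at_top sequentially"
    and a: "a \<in> {0<..<curve_length f}" and b: "b \<in> {0<..<curve_length f}" and "a \<noteq> b"
  shows "(\<lambda>n. fine_polygon.step_fn f (\<theta> n) (M n) (a, b)) \<longlonglongrightarrow> energy_density (a, b)"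
proof -
  interpret P: fine_polygon f f' K L1 L2 "\<theta> n" "M n" for n by (rule fine)
  have bound: "(\<lambda>n. L2 / real (M n)) \<longlonglongrightarrow> 0"
    using filterlim_compose[OF filterlim_real_sequentially M]
    by (intro tendsto_divide_0[OF tendsto_const] filterlim_at_top_imp_at_infinity)
  have side: "(\<lambda>n. P.side n) \<longlonglongrightarrow> 0"
  proof (rule tendsto_sandwich[OF _ _ tendsto_const bound])
    show "eventually (\<lambda>n. 0 \<le> P.side n) sequentially" using P.side_pos by (simp add: less_imp_le)
    show "eventually (\<lambda>n. P.side n \<le> L2 / real (M n)) sequentially" using P.side_le by simp
  qed
  have "\<forall>n. \<exists>k. k < M n \<and> a \<in> P.cell n k" "\<forall>n. \<exists>k. k < M n \<and> b \<in> P.cell n k"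
    using P.cell_cover a b by auto
  then obtain k k' where k: "\<And>n. k n < M n" "\<And>n. a \<in> P.cell n (k n)"
    and k': "\<And>n. k' n < M n" "\<And>n. b \<in> P.cell n (k' n)"
    by metis
  note lim_a = cell_limits[OF fine side k] and lim_b = cell_limits[OF fine side k']
  define x y where "x = arclen_inv a" and "y = arclen_inv b"
  have "x \<noteq> y" "\<bar>y - x\<bar> < 1"
    using arclen_arclen_inv[of a] arclen_arclen_inv[of b] arclen_inv_bounds[OF a] arclen_inv_bounds[OF b]
      a b \<open>a \<noteq> b\<close> by (auto simp: x_def y_def)
  then have "0 < L1 * circ_dist y x" using L1_pos circ_dist_pos by simp
  then have fxy: "0 < norm (f y - f x)" using bilipschitz(1)[of y x] by linarith
  define Q where "Q n = (P.side n / P.arc_side n (k n)) * (P.side n / P.arc_side n (k' n)) *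
    ((norm (P.edge_dir n (k n) - P.edge_dir n (k' n)))\<^sup>2 +
     (norm (P.edge_dir n (Suc (k n)) - P.edge_dir n (Suc (k' n))))\<^sup>2) /
    (2 * (norm (f (P.theta_ext n (k' n)) - f (P.theta_ext n (k n))) *
          norm (f (P.theta_ext n (Suc (k' n))) - f (P.theta_ext n (Suc (k n))))))" for n
  have "Q \<longlonglongrightarrow> 1 * 1 * ((norm (tangent x - tangent y))\<^sup>2 + (norm (tangent x - tangent y))\<^sup>2) /
      (2 * (norm (f y - f x) * norm (f y - f x)))"
    unfolding Q_def x_def y_def using fxy lim_a lim_b by (intro tendsto_intros) (auto simp: x_def y_def)
  also have "1 * 1 * ((norm (tangent x - tangent y))\<^sup>2 + (norm (tangent x - tangent y))\<^sup>2) /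
      (2 * (norm (f y - f x) * norm (f y - f x))) = energy_density (a, b)"
    using energy_density_eq[OF a b] fxy by (simp add: x_def y_def norm_minus_commute power2_eq_square)
  finally have Q: "Q \<longlonglongrightarrow> energy_density (a, b)" .
  have "(\<lambda>n. norm (f (P.theta_ext n (k' n)) - f (P.theta_ext n (k n)))) \<longlonglongrightarrow> norm (f y - f x)"
    using lim_a(3) lim_b(3) by (intro tendsto_intros) (simp_all add: x_def y_def)
  then have "eventually (\<lambda>n. 0 < norm (f (P.theta_ext n (k' n)) - f (P.theta_ext n (k n)))) sequentially"
    using fxy by (rule order_tendstoD(1))
  then have "eventually (\<lambda>n. Q n = P.step_fn n (a, b)) sequentially"
  proof eventually_elim
    case (elim n)
    then have "k n \<noteq> k' n" by auto
    then show ?case using P.step_fn_eq[OF k(1) k'(1) k(2) k'(2)] by (simp add: Q_def)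
  qed
  then show ?thesis by (rule Lim_transform_eventually[OF Q])
qed

theorem polygon_energy_tendsto:
  assumes fine: "\<And>n. fine_polygon f f' K L1 L2 (\<theta> n) (M n)"
    and M: "filterlim M at_top sequentially"
  shows "(\<lambda>n. disc_E1 f (\<theta> n) (M n)) \<longlonglongrightarrow> E1 f"
proof -
  interpret P: fine_polygon f f' K L1 L2 "\<theta> n" "M n" for n by (rule fine)
  define A where "A = {0..curve_length f} \<times> {0..curve_length f}"
  have A: "A \<in> sets (lborel :: (real \<times> real) measure)"
    "emeasure (lborel :: (real \<times> real) measure) A = ennreal (curve_length f * curve_length f)"
    using curve_length_pos by (auto simp: A_def borel_prod[symmetric] intro!: emeasure_lborel_Times)
  define N :: "(real \<times> real) set" where "N = {p. (1, -1) \<bullet> p = 0} \<union> {p. (1, 0) \<bullet> p = 0}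
    \<union> {p. (1, 0) \<bullet> p = curve_length f} \<union> {p. (0, 1) \<bullet> p = 0} \<union> {p. (0, 1) \<bullet> p = curve_length f}"
  have N: "N \<in> null_sets lborel"
    unfolding N_def by (intro null_sets.Un hyperplane_in_null_sets_lborel) (auto simp: zero_prod_def)
  have "(\<lambda>n. integral\<^sup>L lborel (P.step_fn n)) \<longlonglongrightarrow> integral\<^sup>L lborel energy_density"
  proof (rule integral_dominated_convergence[where w="\<lambda>p. step_bound * indicator A p"])
    show "integrable lborel (\<lambda>p. step_bound * indicator A p)"
      using A by (intro integrable_mult_right integrable_real_indicator) auto
    show "AE p in lborel. norm (P.step_fn n p) \<le> step_bound * indicator A p" for n
    proof (rule AE_I2)
      fix p :: "real \<times> real"
      show "norm (P.step_fn n p) \<le> step_bound * indicator A p"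
      proof (cases "p \<in> A")
        case True
        then show ?thesis using P.step_fn_bounds[of n p] by simp
      next
        case False
        then have "fst p \<notin> {0..<curve_length f} \<or> snd p \<notin> {0..<curve_length f}"
          by (auto simp: A_def mem_Times_iff)
        then show ?thesis using P.step_fn_outside[of "fst p" "snd p" n] False by simp
      qed
    qed
    show "AE p in lborel. (\<lambda>n. P.step_fn n p) \<longlonglongrightarrow> energy_density p"
    proof (rule AE_I'[OF N], safe)
      fix a b assume "\<not> (\<lambda>n. P.step_fn n (a, b)) \<longlonglongrightarrow> energy_density (a, b)"
      moreover have "(\<lambda>n. P.step_fn n (a, b)) \<longlonglongrightarrow> energy_density (a, b)" if "(a, b) \<notin> N"
      proof (cases "a \<in> {0<..<curve_length f} \<and> b \<in> {0<..<curve_length f}")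
        case True
        then show ?thesis using step_fn_tendsto[OF fine M] that by (auto simp: N_def)
      next
        case False
        then have "(a, b) \<notin> A" using that by (auto simp: A_def N_def)
        then have "a \<notin> {0..<curve_length f} \<or> b \<notin> {0..<curve_length f}"
          and "energy_density (a, b) = 0"
          by (auto simp: A_def energy_density_def)
        then show ?thesis using P.step_fn_outside by simp
      qed
      ultimately show "(a, b) \<in> N" by blast
    qed
  qed (use energy_density_measurable P.step_fn_measurable in auto)
  then show ?thesis
    unfolding P.disc_E1_eq_integral E1_eq_integral by (rule tendsto_mult_left)
qed

end

theorem mainTheorem6:
  fixes f :: "real \<Rightarrow> 'a::euclidean_space" and \<theta> :: "nat \<Rightarrow> nat \<Rightarrow> real" and L1 L2 :: real
  assumes "W2inf_periodic f"
    and "0 < L1" and "L1 \<le> L2"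
    and "\<forall>x y. L1 * circ_dist x y \<le> norm (f x - f y) \<and> norm (f x - f y) \<le> L2 * circ_dist x y"
    and "\<forall>m\<ge>1. 0 \<le> \<theta> m 0 \<and> (\<forall>k. Suc k < m \<longrightarrow> \<theta> m k < \<theta> m (Suc k)) \<and> \<theta> m (m - 1) < 1"
    and "\<forall>m\<ge>1. \<forall>k<m. norm (Delta1 f (\<theta> m) m k) = (\<Sum>l<m. norm (Delta1 f (\<theta> m) m l)) / real m"
  shows "(\<lambda>m. disc_E1 f (\<theta> m) m) \<longlonglongrightarrow> E1 f"
proof -
  obtain C where C: "\<And>x y. norm (vector_derivative f (at x) - vector_derivative f (at y)) \<le> C * \<bar>x - y\<bar>"
    using assms(1) unfolding W2inf_periodic_def by blast
  have curve: "bilipschitz_curve f (\<lambda>x. vector_derivative f (at x)) C L1 L2"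
    using assms(1-4) C by unfold_locales (auto simp: W2inf_periodic_def vector_derivative_works[symmetric])
  define N where "N = nat \<lceil>L2 / L1\<rceil> + 2"
  have "fine_polygon f (\<lambda>x. vector_derivative f (at x)) C L1 L2 (\<theta> m) m" if "N \<le> m" for m
  proof -
    have "L2 / L1 \<le> real (nat \<lceil>L2 / L1\<rceil>)" by linarith
    then have "L2 / L1 < real m - 1" using that by (simp add: N_def)
    then have fine: "L2 < (real m - 1) * L1" using assms(2) by (simp add: field_simps)
    have m: "1 \<le> m" "2 \<le> m" using that by (simp_all add: N_def)
    show ?thesis
      using curve fine m assms(5,6)[rule_format, OF m(1)]
      by (intro fine_polygon.intro equilateral_polygon.intro equilateral_polygon_axioms.intro
          fine_polygon_axioms.intro) blast+
  qed
  then have "(\<lambda>n. disc_E1 f (\<theta> (n + N)) (n + N)) \<longlonglongrightarrow> E1 f"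
    by (intro bilipschitz_curve.polygon_energy_tendsto[OF curve] filterlim_subseq) (auto simp: strict_mono_def)
  then show ?thesis by (rule LIMSEQ_offset)
qed

end
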